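(* For every integer $n>1$, $\mathrm{Log}_{>1}(\mathbb{R})\not\subseteq \mathrm{Log}_{>1}(\mathbb{R}^n)$.
   Context: Modal formulas are built from a countable set of propositional variables using $\bot$, $\to$ and one unary modality $\lozenge$; $\Box\varphi$ abbreviates $\neg\lozenge\neg\varphi$. A frame is a pair $(X,R)$ with $R\subseteq X\times X$; a valuation assigns to each variable a subset of $X$; truth is defined as usual, with $x\models\lozenge\varphi$ iff there is $y$ with $xRy$ and $y\models\varphi$. A formula is valid in a frame if it is true at every point under every valuation. For a metric space $(X,d)$, the farness frame is $(X,R_{>1})$ where $x R_{>1} y$ iff $d(x,y)>1$, and $\mathrm{Log}_{>1}(X)$ denotes the set of modal formulas valid in this frame. $\mathbb{R}^n$ carries the Euclidean metric. *)

theory Defs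
  imports "HOL-Analysis.Analysis"
begin

datatype fm = Var nat | Bot | Imp fm fm | Dia fm

definition Neg :: "fm \<Rightarrow> fm" where "Neg \<phi> = Imp \<phi> Bot"
definition Box :: "fm \<Rightarrow> fm" where "Box \<phi> = Neg (Dia (Neg \<phi>))"

fun sat :: "'a set \<Rightarrow> ('a \<Rightarrow> 'a \<Rightarrow> bool) \<Rightarrow> (nat \<Rightarrow> 'a set) \<Rightarrow> 'a \<Rightarrow> fm \<Rightarrow> bool" where
  "sat X R V x (Var p) = (x \<in> V p)"
| "sat X R V x Bot = False"
| "sat X R V x (Imp \<phi> \<psi>) = (sat X R V x \<phi> \<longrightarrow> sat X R V x \<psi>)"
| "sat X R V x (Dia \<phi>) = (\<exists>y\<in>X. R x y \<and> sat X R V y \<phi>)"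

definition valid_in_frame :: "'a set \<Rightarrow> ('a \<Rightarrow> 'a \<Rightarrow> bool) \<Rightarrow> fm \<Rightarrow> bool" where
  "valid_in_frame X R \<phi> \<longleftrightarrow>
     (\<forall>V. (\<forall>p. V p \<subseteq> X) \<longrightarrow> (\<forall>x\<in>X. sat X R V x \<phi>))"

definition far_rel :: "'a::metric_space \<Rightarrow> 'a \<Rightarrow> bool" where
  "far_rel x y \<longleftrightarrow> dist x y > 1"

definition Log_far :: "'a::metric_space set \<Rightarrow> fm set" where
  "Log_far X = {\<phi>. valid_in_frame X far_rel \<phi>}"

end

theory Submission
  imports Defs
begin

text \<open>
  In the farness frame, \<open>\<not>\<diamond>p\<close> holds at \<open>w\<close> iff every \<open>p\<close>-point lies in the closed
  unit ball around \<open>w\<close>, and since any two points of an unbounded space have a common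
  far point, \<open>\<diamond>\<diamond>\<close> is the existential modality. So the formula \<open>helly3\<close> expresses a
  Helly property: if any two of three sets can be covered by a unit ball, all three
  can. On the line this holds because the median of the three pairwise centres is a
  common centre. In dimension at least 2 it fails for the points \<open>0\<close>, \<open>2u\<close> and
  \<open>u + 3/2 v\<close> with \<open>u\<close>, \<open>v\<close> orthonormal: each pair is at distance at most 2, but the
  only unit ball containing \<open>0\<close> and \<open>2u\<close> is the one around \<open>u\<close>, which misses the
  third point.
\<close>

definition Conj :: "fm \<Rightarrow> fm \<Rightarrow> fm" where
  "Conj \<phi> \<psi> = Neg (Imp \<phi> (Neg \<psi>))"

definition Somewhere :: "fm \<Rightarrow> fm" where
  "Somewhere \<phi> = Dia (Dia \<phi>)"

definition Covers :: "nat \<Rightarrow> fm" where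
  "Covers p = Neg (Dia (Var p))"

definition helly3 :: fm where
  "helly3 =
     Imp (Somewhere (Conj (Covers 0) (Covers 1)))
      (Imp (Somewhere (Conj (Covers 1) (Covers 2)))
        (Imp (Somewhere (Conj (Covers 0) (Covers 2)))
          (Somewhere (Conj (Covers 0) (Conj (Covers 1) (Covers 2))))))"

definition unit_coverable :: "'a::metric_space set \<Rightarrow> bool" where
  "unit_coverable S \<longleftrightarrow> (\<exists>w. S \<subseteq> cball w 1)"

lemma sat_Conj [simp]: "sat X R V x (Conj \<phi> \<psi>) \<longleftrightarrow> sat X R V x \<phi> \<and> sat X R V x \<psi>"
  by (auto simp: Conj_def Neg_def)

lemma sat_Covers [simp]: "sat UNIV far_rel V w (Covers p) \<longleftrightarrow> V p \<subseteq> cball w 1"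
  by (auto simp: Covers_def Neg_def far_rel_def not_less)

lemma far_rel_common_point:
  fixes x w :: "'a::euclidean_space"
  obtains y where "far_rel x y" "far_rel y w"
proof -
  obtain u :: 'a where "u \<in> Basis"
    using nonempty_Basis by blast
  define y where "y = (norm x + norm w + 2) *\<^sub>R u"
  have "norm y = norm x + norm w + 2"
    using \<open>u \<in> Basis\<close> by (simp add: y_def)
  moreover have "norm y - norm x \<le> norm (x - y)"
    by (metis norm_minus_commute norm_triangle_ineq2)
  moreover have "norm y - norm w \<le> norm (y - w)"
    by (rule norm_triangle_ineq2)
  ultimately have "far_rel x y" "far_rel y w"
    unfolding far_rel_def dist_norm using norm_ge_zero[of x] norm_ge_zero[of w] by linarith+
  then show thesis
    by (rule that)
qed

lemma sat_Somewhere: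
  "sat UNIV far_rel V x (Somewhere \<phi>) \<longleftrightarrow> (\<exists>w::'a::euclidean_space. sat UNIV far_rel V w \<phi>)"
  unfolding Somewhere_def by (metis UNIV_I far_rel_common_point sat.simps(4))

lemma helly3_in_Log_far_iff:
  "helly3 \<in> Log_far (UNIV :: 'a::euclidean_space set) \<longleftrightarrow>
    (\<forall>A B C :: 'a set. unit_coverable (A \<union> B) \<longrightarrow> unit_coverable (B \<union> C) \<longrightarrow>
       unit_coverable (A \<union> C) \<longrightarrow> unit_coverable (A \<union> B \<union> C))"
  (is "?valid \<longleftrightarrow> ?helly")
proof
  assume ?valid
  then have valid: "sat UNIV far_rel V 0 helly3" for V :: "nat \<Rightarrow> 'a set"
    by (auto simp: Log_far_def valid_in_frame_def)
  show ?helly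
  proof (intro allI impI)
    fix A B C :: "'a set"
    define V where "V p = (if p = 0 then A else if p = 1 then B else if p = 2 then C else {})"
      for p :: nat
    assume "unit_coverable (A \<union> B)" "unit_coverable (B \<union> C)" "unit_coverable (A \<union> C)"
    with valid[of V] show "unit_coverable (A \<union> B \<union> C)"
      by (simp add: helly3_def sat_Somewhere unit_coverable_def V_def)
  qed
next
  assume ?helly
  then have "sat UNIV far_rel V x helly3" for V and x :: 'a
    using spec[of _ "V 0"] spec[of _ "V 1"] spec[of _ "V 2"]
    by (simp add: helly3_def sat_Somewhere unit_coverable_def Un_assoc)
  then show ?valid
    by (simp add: Log_far_def valid_in_frame_def)
qed

definition median :: "real \<Rightarrow> real \<Rightarrow> real \<Rightarrow> real" where
  "median a b c = max (min a b) (min (max a b) c)"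

lemma median_mem_cball:
  assumes "s \<in> cball a r \<inter> cball b r \<or> s \<in> cball b r \<inter> cball c r \<or> s \<in> cball a r \<inter> cball c r"
  shows "s \<in> cball (median a b c) r"
  using assms by (auto simp: median_def dist_real_def max_def min_def)

lemma real_unit_coverable_helly3:
  fixes A B C :: "real set"
  assumes "unit_coverable (A \<union> B)" "unit_coverable (B \<union> C)" "unit_coverable (A \<union> C)"
  shows "unit_coverable (A \<union> B \<union> C)"
proof -
  from assms obtain a b c where
    "A \<union> B \<subseteq> cball a 1" "B \<union> C \<subseteq> cball b 1" "A \<union> C \<subseteq> cball c 1"
    by (auto simp: unit_coverable_def)
  then have "s \<in> cball (median a b c) 1" if "s \<in> A \<union> B \<union> C" for s
    using that median_mem_cball[of s a 1 b c] by blast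
  then show ?thesis
    unfolding unit_coverable_def by blast
qed

lemma unit_coverable_pair:
  fixes a b :: "'a::real_normed_vector"
  assumes "dist a b \<le> 2"
  shows "unit_coverable {a, b}"
  unfolding unit_coverable_def
  using assms by (intro exI[of _ "midpoint a b"]) (auto simp: dist_midpoint)

lemma cball_Int_cball_tangent:
  fixes u :: "'a::real_inner"
  assumes "norm u = 1"
  shows "cball 0 1 \<inter> cball (2 *\<^sub>R u) 1 = {u}"
proof (intro equalityI subsetI)
  fix z
  assume "z \<in> cball 0 1 \<inter> cball (2 *\<^sub>R u) 1"
  then have "(norm z)\<^sup>2 \<le> 1" "(norm (2 *\<^sub>R u - z))\<^sup>2 \<le> 1"
    by (auto simp: dist_norm power_le_one)
  moreover have "(norm (z - u))\<^sup>2 = ((norm (2 *\<^sub>R u - z))\<^sup>2 + (norm z)\<^sup>2) / 2 - (norm u)\<^sup>2"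
    by (simp add: power2_norm_eq_inner inner_diff inner_commute algebra_simps)
  ultimately have "(norm (z - u))\<^sup>2 \<le> 0"
    using assms by simp
  then show "z \<in> {u}"
    by simp
next
  fix z
  assume "z \<in> {u}"
  then show "z \<in> cball 0 1 \<inter> cball (2 *\<^sub>R u) 1"
    using assms by (simp add: dist_norm scaleR_2)
qed

lemma norm_orthonormal_combination:
  fixes u v :: "'a::real_inner"
  assumes "norm u = 1" "norm v = 1" "u \<bullet> v = 0"
  shows "(norm (a *\<^sub>R u + b *\<^sub>R v))\<^sup>2 = a\<^sup>2 + b\<^sup>2"
proof -
  have "u \<bullet> u = 1" "v \<bullet> v = 1"
    using assms(1,2) by (simp_all add: norm_eq_1)
  then show ?thesis
    unfolding power2_norm_eq_inner using assms(3)
    by (simp add: inner_add inner_commute power2_eq_square)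
qed

lemma helly3_counterexample_orthonormal:
  fixes u v :: "'a::real_inner"
  assumes "norm u = 1" "norm v = 1" "u \<bullet> v = 0"
  defines "p \<equiv> u + (3/2) *\<^sub>R v"
  shows "unit_coverable ({0} \<union> {2 *\<^sub>R u})" "unit_coverable ({2 *\<^sub>R u} \<union> {p})"
    "unit_coverable ({0} \<union> {p})" "\<not> unit_coverable ({0} \<union> {2 *\<^sub>R u} \<union> {p})"
proof -
  have "(norm (u - (3/2) *\<^sub>R v))\<^sup>2 = 13/4" "(norm p)\<^sup>2 = 13/4"
    using norm_orthonormal_combination[OF assms(1-3), of 1 "-3/2"]
      norm_orthonormal_combination[OF assms(1-3), of 1 "3/2"]
    by (simp_all add: p_def power2_eq_square)
  moreover have "2 *\<^sub>R u - p = u - (3/2) *\<^sub>R v"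
    by (simp add: p_def scaleR_2 algebra_simps)
  ultimately have "(dist (2 *\<^sub>R u) p)\<^sup>2 \<le> 2\<^sup>2" "(dist 0 p)\<^sup>2 \<le> 2\<^sup>2"
    by (simp_all add: dist_norm)
  then have "dist (2 *\<^sub>R u) p \<le> 2" "dist 0 p \<le> 2"
    by (meson power2_le_imp_le zero_le_numeral)+
  moreover have "dist 0 (2 *\<^sub>R u) \<le> 2"
    using assms(1) by simp
  ultimately show "unit_coverable ({0} \<union> {2 *\<^sub>R u})" "unit_coverable ({2 *\<^sub>R u} \<union> {p})"
      "unit_coverable ({0} \<union> {p})"
    unfolding Un_insert_left Un_empty_left by (blast intro: unit_coverable_pair)+
  show "\<not> unit_coverable ({0} \<union> {2 *\<^sub>R u} \<union> {p})"
  proof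
    assume "unit_coverable ({0} \<union> {2 *\<^sub>R u} \<union> {p})"
    then obtain w where w: "0 \<in> cball w 1" "2 *\<^sub>R u \<in> cball w 1" "p \<in> cball w 1"
      by (auto simp: unit_coverable_def)
    then have "w \<in> cball 0 1 \<inter> cball (2 *\<^sub>R u) 1"
      by (simp add: dist_commute)
    then have "w = u"
      using cball_Int_cball_tangent[OF assms(1)] by blast
    moreover have "dist u p = 3/2"
      using assms(2) by (simp add: dist_norm p_def)
    ultimately show False
      using w(3) by simp
  qed
qed

lemma Log_far_real_not_subset:
  assumes "DIM('a::euclidean_space) > 1"
  shows "\<not> Log_far (UNIV :: real set) \<subseteq> Log_far (UNIV :: 'a set)"
proof -
  obtain u v :: 'a where "u \<in> Basis" "v \<in> Basis" "u \<noteq> v"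
    using assms by (metis One_nat_def card_le_Suc0_iff_eq finite_Basis not_less)
  then have "norm u = 1" "norm v = 1" "u \<bullet> v = 0"
    by (simp_all add: inner_not_same_Basis)
  from helly3_counterexample_orthonormal[OF this] have "helly3 \<notin> Log_far (UNIV :: 'a set)"
    unfolding helly3_in_Log_far_iff by blast
  moreover have "helly3 \<in> Log_far (UNIV :: real set)"
    unfolding helly3_in_Log_far_iff using real_unit_coverable_helly3 by blast
  ultimately show ?thesis
    by blast
qed

theorem proposition3p1:
  assumes "CARD('n::finite) > 1"
  shows "\<not> (Log_far (UNIV :: real set) \<subseteq> Log_far (UNIV :: (real ^ 'n) set))"
  using Log_far_real_not_subset[where 'a = "real ^ 'n"] assms by simp

end
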